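(* Assume (F1)–(F3) and let $\tau\ge0$, $c\in\mathbb R$. Let $w\in C^2(\mathbb R)$ be a monotonically decreasing solution of $w''(x)+cw'(x)+w(x)\big(1-w(x)-f(w(x+c\tau))\big)=0$ on $\mathbb R$. If $w(-\infty)=w_0$ and $w(+\infty)=0$, then $c<0$. If $w(-\infty)=1$ and $w(+\infty)=w_0$, then $c>0$.
   Context: $f:\mathbb R\to\mathbb R$ is $C^4$ with bounded derivatives and satisfies: (F1) $f(w)>0$ for $0\le w<1$, $f(1)=0$, $f'(1)>-1$; (F2) $f(0)>1$, $f'(0)>0$, and $f(w)>1$ for $0\le w<w_*$ for some $w_*\in(0,1)$; (F3) the equation $f(w)=1-w$ has exactly one solution $w_0$ in $(0,1)$, and $f'(w_0)<-1$; hence $f(w)>1-w$ for $0\le w<w_0$ and $f(w)<1-w$ for $w_0<w<1$. *)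

theory Defs
  imports "HOL-Analysis.Analysis"
begin

definition C4_bounded_derivs :: "(real \<Rightarrow> real) \<Rightarrow> bool" where
  "C4_bounded_derivs f \<longleftrightarrow>
     (\<forall>k<4. \<forall>x. ((deriv ^^ k) f has_real_derivative (deriv ^^ Suc k) f x) (at x))
   \<and> continuous_on UNIV ((deriv ^^ 4) f)
   \<and> (\<forall>k\<in>{1..4}. bounded (range ((deriv ^^ k) f)))"

definition hypF :: "(real \<Rightarrow> real) \<Rightarrow> real \<Rightarrow> bool" where
  "hypF f w0 \<longleftrightarrow>
     C4_bounded_derivs f
   \<and> (\<forall>w. 0 \<le> w \<and> w < 1 \<longrightarrow> f w > 0) \<and> f 1 = 0 \<and> deriv f 1 > -1
   \<and> f 0 > 1 \<and> deriv f 0 > 0 \<and> (\<exists>ws. 0 < ws \<and> ws < 1 \<and> (\<forall>w. 0 \<le> w \<and> w < ws \<longrightarrow> f w > 1))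
   \<and> 0 < w0 \<and> w0 < 1 \<and> f w0 = 1 - w0
   \<and> (\<forall>w. 0 < w \<and> w < 1 \<and> f w = 1 - w \<longrightarrow> w = w0)
   \<and> deriv f w0 < -1"

end

theory Submission
  imports Defs
begin

text \<open>Suppose, say, w(-\<infinity>) = w0, w(+\<infinity>) = 0 and c \<ge> 0. Then 0 \<le> w \<le> w0 and, w being
  decreasing, w(x + c\<tau>) \<le> w(x) \<le> w0, so (F3) gives f(w(x + c\<tau>)) \<ge> 1 - w(x + c\<tau>) \<ge> 1 - w(x):
  the reaction term is \<le> 0 and w'' + c w' \<ge> 0. Hence e^{cx} w' is nondecreasing, so
  w' \<le> w'(x0) < 0 to the left of any point x0 where w'(x0) < 0, and w grows at least linearly
  towards -\<infinity>, contradicting boundedness. The second claim is the mirror image.\<close>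

lemma exp_weighted_deriv_mono:
  fixes w' w'' :: "real \<Rightarrow> real" and c :: real
  assumes w'': "\<And>x. (w' has_real_derivative w'' x) (at x)"
    and super: "\<And>x. w'' x + c * w' x \<ge> 0"
    and "x \<le> y"
  shows "exp (c * x) * w' x \<le> exp (c * y) * w' y"
proof (rule DERIV_nonneg_imp_nondecreasing[OF \<open>x \<le> y\<close>])
  fix t
  have "((\<lambda>t. exp (c * t) * w' t) has_real_derivative exp (c * t) * (w'' t + c * w' t)) (at t)"
    by (auto intro!: derivative_eq_intros w'' simp: algebra_simps)
  then show "\<exists>d. ((\<lambda>t. exp (c * t) * w' t) has_real_derivative d) (at t) \<and> 0 \<le> d"
    using super by (meson exp_ge_zero mult_nonneg_nonneg)
qed

lemma super_solution_deriv_le_left: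
  fixes w' w'' :: "real \<Rightarrow> real" and c :: real
  assumes w'': "\<And>x. (w' has_real_derivative w'' x) (at x)"
    and super: "\<And>x. w'' x + c * w' x \<ge> 0"
    and c: "c \<ge> 0" and neg: "w' x0 \<le> 0" and "x \<le> x0"
  shows "w' x \<le> w' x0"
proof -
  have "w' x \<le> exp (c * x0 - c * x) * w' x0"
    using exp_weighted_deriv_mono[OF w'' super \<open>x \<le> x0\<close>] by (simp add: exp_diff field_simps)
  also have "\<dots> \<le> w' x0"
  proof -
    have "exp (c * x0 - c * x) \<ge> 1" using c \<open>x \<le> x0\<close> by (simp add: mult_left_mono)
    then show ?thesis using neg by (simp add: mult_le_cancel_right2)
  qed
  finally show ?thesis .
qed

lemma super_solution_unbounded_above:
  fixes w w' w'' :: "real \<Rightarrow> real" and c :: real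
  assumes w': "\<And>x. (w has_real_derivative w' x) (at x)"
    and w'': "\<And>x. (w' has_real_derivative w'' x) (at x)"
    and super: "\<And>x. w'' x + c * w' x \<ge> 0"
    and c: "c \<ge> 0" and neg: "w' x0 < 0"
  shows "\<not> bdd_above (range w)"
proof
  assume "bdd_above (range w)"
  then obtain M where M: "\<And>x. w x \<le> M" by (auto simp: bdd_above_def)
  define a where "a = w' x0"
  have linear: "w x \<ge> w x0 + a * (x - x0)" if "x \<le> x0" for x
  proof -
    have "w x - a * x \<ge> w x0 - a * x0"
    proof (rule DERIV_nonpos_imp_nonincreasing[OF that])
      fix t assume "x \<le> t" "t \<le> x0"
      then have "w' t - a \<le> 0"
        using super_solution_deriv_le_left[OF w'' super c _ \<open>t \<le> x0\<close>] neg by (simp add: a_def)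
      moreover have "((\<lambda>t. w t - a * t) has_real_derivative w' t - a) (at t)"
        by (auto intro!: derivative_eq_intros w')
      ultimately show "\<exists>d. ((\<lambda>t. w t - a * t) has_real_derivative d) (at t) \<and> d \<le> 0" by blast
    qed
    then show ?thesis by (simp add: algebra_simps)
  qed
  define x where "x = x0 + (M + 1 - w x0) / a"
  have "M + 1 - w x0 > 0" using M[of x0] by simp
  then have "x \<le> x0" using neg by (simp add: x_def a_def divide_pos_neg less_imp_le)
  moreover have "a * (x - x0) = M + 1 - w x0" using neg by (simp add: x_def a_def)
  ultimately show False using linear[of x] M[of x] by simp
qed

text \<open>Apply the previous lemma to x \<mapsto> -w(-x).\<close>

lemma sub_solution_unbounded_below:
  fixes w w' w'' :: "real \<Rightarrow> real" and c :: real
  assumes w': "\<And>x. (w has_real_derivative w' x) (at x)"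
    and w'': "\<And>x. (w' has_real_derivative w'' x) (at x)"
    and sub: "\<And>x. w'' x + c * w' x \<le> 0"
    and c: "c \<le> 0" and neg: "w' x0 < 0"
  shows "\<not> bdd_below (range w)"
proof
  assume "bdd_below (range w)"
  then have "bdd_above (range (\<lambda>x. - w (- x)))"
    by (auto simp: bdd_above_def bdd_below_def) (meson neg_le_iff_le)
  moreover have "\<not> bdd_above (range (\<lambda>x. - w (- x)))"
  proof (rule super_solution_unbounded_above)
    show "((\<lambda>x. - w (- x)) has_real_derivative w' (- x)) (at x)" for x
      by (auto intro!: derivative_eq_intros DERIV_chain2[OF w'])
    show "((\<lambda>x. w' (- x)) has_real_derivative - w'' (- x)) (at x)" for x
      using DERIV_chain2[OF w'' DERIV_minus[OF DERIV_ident]] by simp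
    show "- w'' (- x) + - c * w' (- x) \<ge> 0" for x using sub[of "- x"] by simp
    show "- c \<ge> 0" using c by simp
    show "w' (- (- x0)) < 0" using neg by simp
  qed
  ultimately show False by contradiction
qed

lemma antimono_deriv_neg_somewhere:
  fixes w w' :: "real \<Rightarrow> real"
  assumes w': "\<And>x. (w has_real_derivative w' x) (at x)"
    and mono: "antimono w"
    and lim_bot: "(w \<longlongrightarrow> a) at_bot" and lim_top: "(w \<longlongrightarrow> b) at_top" and "a \<noteq> b"
  shows "\<exists>x. w' x < 0"
proof (rule ccontr)
  assume "\<not> ?thesis"
  then have "w x \<le> w y" if "x \<le> y" for x y
    using DERIV_nonneg_imp_nondecreasing[OF that] w' by (meson not_less)
  with mono have "w x = w 0" for x
    by (metis antimono_def linear order_antisym)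
  then have "w = (\<lambda>_. w 0)" by blast
  with lim_bot lim_top \<open>a \<noteq> b\<close> show False
    by (metis tendsto_const_iff trivial_limit_at_bot_linorder trivial_limit_at_top_linorder)
qed

lemma antimono_le_lim_at_bot:
  fixes w :: "real \<Rightarrow> real"
  assumes "antimono w" "(w \<longlongrightarrow> a) at_bot"
  shows "w x \<le> a"
  by (rule tendsto_lowerbound[OF assms(2)])
    (use assms(1) in \<open>auto simp: antimono_def eventually_at_bot_linorder\<close>)

lemma antimono_ge_lim_at_top:
  fixes w :: "real \<Rightarrow> real"
  assumes "antimono w" "(w \<longlongrightarrow> a) at_top"
  shows "w x \<ge> a"
  by (rule tendsto_upperbound[OF assms(2)])
    (use assms(1) in \<open>auto simp: antimono_def eventually_at_top_linorder\<close>)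

lemma hypF_has_real_derivative:
  assumes "hypF f w0"
  shows "(f has_real_derivative deriv f x) (at x)"
proof -
  have "((deriv ^^ 0) f has_real_derivative (deriv ^^ Suc 0) f x) (at x)"
    using assms unfolding hypF_def C4_bounded_derivs_def by (metis zero_less_numeral)
  then show ?thesis by simp
qed

lemma hypF_continuous_on:
  assumes "hypF f w0"
  shows "continuous_on S f"
  by (meson DERIV_isCont continuous_at_imp_continuous_on hypF_has_real_derivative[OF assms])

text \<open>Both sign facts follow from the uniqueness of the root w0 via the intermediate value
  theorem, anchored by f(0) > 1 on the left and by f'(1) > -1 on the right.\<close>

lemma hypF_above_diagonal:
  assumes hF: "hypF f w0" and "0 \<le> v" "v < w0"
  shows "f v > 1 - v"
proof (rule ccontr)
  have f0: "f 0 > 1" and uniq: "\<And>u. 0 < u \<Longrightarrow> u < 1 \<Longrightarrow> f u = 1 - u \<Longrightarrow> u = w0"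
    and "w0 < 1" using hF by (auto simp: hypF_def)
  assume "\<not> ?thesis"
  then have "(\<lambda>u. 1 - u - f u) 0 \<le> 0" "0 \<le> (\<lambda>u. 1 - u - f u) v" using f0 by auto
  moreover have "continuous_on {0..v} (\<lambda>u. 1 - u - f u)"
    using hypF_continuous_on[OF hF] by (auto intro!: continuous_intros)
  ultimately obtain u where u: "0 \<le> u" "u \<le> v" "1 - u - f u = 0"
    using IVT'[of "\<lambda>u. 1 - u - f u" 0 0 v] \<open>0 \<le> v\<close> by (metis (no_types, lifting))
  moreover have "u \<noteq> 0" using u f0 by auto
  ultimately show False using uniq[of u] \<open>v < w0\<close> \<open>w0 < 1\<close> by auto
qed

lemma hypF_below_diagonal:
  assumes hF: "hypF f w0" and "w0 \<le> v" "v \<le> 1"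
  shows "f v \<le> 1 - v"
proof (rule ccontr)
  have f1: "f 1 = 0" and fd1: "deriv f 1 > -1" and fw0: "f w0 = 1 - w0" and "0 < w0"
    and uniq: "\<And>u. 0 < u \<Longrightarrow> u < 1 \<Longrightarrow> f u = 1 - u \<Longrightarrow> u = w0"
    using hF by (auto simp: hypF_def)
  let ?g = "\<lambda>u. f u + u - 1"
  assume "\<not> ?thesis"
  then have gv: "?g v > 0" and "v \<noteq> w0" "v \<noteq> 1" using f1 fw0 by auto
  then have "w0 < v" "v < 1" using \<open>w0 \<le> v\<close> \<open>v \<le> 1\<close> by auto
  have "(?g has_real_derivative deriv f 1 + 1) (at 1)"
    by (auto intro!: derivative_eq_intros hypF_has_real_derivative[OF hF])
  from DERIV_pos_inc_left[OF this] fd1 obtain d where d: "d > 0"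
    "\<And>h. h > 0 \<Longrightarrow> h < d \<Longrightarrow> ?g (1 - h) < ?g 1" by auto
  define t where "t = min (d / 2) ((1 - v) / 2)"
  have t: "t > 0" "t < d" "t < 1 - v" using d \<open>v < 1\<close> by (auto simp: t_def min_def)
  have "?g (1 - t) \<le> 0" using d(2)[OF t(1,2)] f1 by simp
  moreover have "\<forall>x. v \<le> x \<and> x \<le> 1 - t \<longrightarrow> isCont ?g x"
    using hypF_continuous_on[OF hF, of UNIV]
    by (auto intro!: continuous_intros simp: continuous_on_eq_continuous_at)
  ultimately obtain u where "v \<le> u" "u \<le> 1 - t" "?g u = 0"
    using IVT2[of ?g "1 - t" 0 v] gv t by auto
  then show False using uniq[of u] \<open>w0 < v\<close> \<open>0 < w0\<close> t by auto
qed

context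
  fixes f w :: "real \<Rightarrow> real" and w0 \<tau> c :: real
  assumes hF: "hypF f w0"
    and tau: "\<tau> \<ge> 0"
    and w1: "\<And>x. (w has_real_derivative deriv w x) (at x)"
    and w2: "\<And>x. (deriv w has_real_derivative deriv (deriv w) x) (at x)"
    and mono: "antimono w"
    and eq: "\<And>x. deriv (deriv w) x + c * deriv w x
                  + w x * (1 - w x - f (w (x + c * \<tau>))) = 0"
begin

lemma w0_pos: "0 < w0" and w0_lt_1: "w0 < 1"
  using hF by (simp_all add: hypF_def)

lemma front_from_w0_to_0_speed_neg:
  assumes lim_bot: "(w \<longlongrightarrow> w0) at_bot" and lim_top: "(w \<longlongrightarrow> 0) at_top"
  shows "c < 0"
proof (rule ccontr)
  assume "\<not> c < 0"
  then have c: "c \<ge> 0" by simp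
  have le_w0: "w x \<le> w0" and ge_0: "w x \<ge> 0" for x
    using antimono_le_lim_at_bot[OF mono lim_bot] antimono_ge_lim_at_top[OF mono lim_top] by auto
  have super: "deriv (deriv w) x + c * deriv w x \<ge> 0" for x
  proof -
    define v where "v = w (x + c * \<tau>)"
    have "v \<le> w x" using mono c tau by (simp add: v_def antimono_def)
    moreover have "f v \<ge> 1 - v"
    proof (cases "v = w0")
      case True
      then show ?thesis using hF by (simp add: hypF_def)
    next
      case False
      moreover have "0 \<le> v" "v \<le> w0" using ge_0 le_w0 by (simp_all add: v_def)
      ultimately show ?thesis using hypF_above_diagonal[OF hF, of v] by simp
    qed
    ultimately have "w x * (1 - w x - f v) \<le> 0" using ge_0[of x] by (simp add: mult_nonneg_nonpos)
    then show ?thesis using eq[of x] by (simp add: v_def)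
  qed
  obtain x0 where "deriv w x0 < 0"
    using antimono_deriv_neg_somewhere[OF w1 mono lim_bot lim_top] w0_pos by auto
  then have "\<not> bdd_above (range w)" by (rule super_solution_unbounded_above[OF w1 w2 super c])
  with le_w0 show False by (auto simp: bdd_above_def)
qed

lemma front_from_1_to_w0_speed_pos:
  assumes lim_bot: "(w \<longlongrightarrow> 1) at_bot" and lim_top: "(w \<longlongrightarrow> w0) at_top"
  shows "c > 0"
proof (rule ccontr)
  assume "\<not> c > 0"
  then have c: "c \<le> 0" by simp
  have le_1: "w x \<le> 1" and ge_w0: "w x \<ge> w0" for x
    using antimono_le_lim_at_bot[OF mono lim_bot] antimono_ge_lim_at_top[OF mono lim_top] by auto
  have sub: "deriv (deriv w) x + c * deriv w x \<le> 0" for x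
  proof -
    define v where "v = w (x + c * \<tau>)"
    have "c * \<tau> \<le> 0" using c tau by (simp add: mult_nonpos_nonneg)
    then have "w x \<le> v" using mono by (simp add: v_def antimono_def)
    moreover have "f v \<le> 1 - v" using hypF_below_diagonal[OF hF] ge_w0 le_1 by (simp add: v_def)
    ultimately have "1 - w x - f v \<ge> 0" by simp
    moreover have "w x \<ge> 0" using ge_w0[of x] w0_pos by simp
    ultimately have "w x * (1 - w x - f v) \<ge> 0" by simp
    then show ?thesis using eq[of x] by (simp add: v_def)
  qed
  obtain x0 where "deriv w x0 < 0"
    using antimono_deriv_neg_somewhere[OF w1 mono lim_bot lim_top] w0_lt_1 by auto
  then have "\<not> bdd_below (range w)" by (rule sub_solution_unbounded_below[OF w1 w2 sub c])
  with ge_w0 show False by (auto simp: bdd_below_def)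
qed

end

theorem lemma4p3:
  fixes f w :: "real \<Rightarrow> real" and w0 \<tau> c :: real
  assumes hF: "hypF f w0"
    and tau: "\<tau> \<ge> 0"
    and w1: "\<And>x. (w has_real_derivative deriv w x) (at x)"
    and w2: "\<And>x. (deriv w has_real_derivative deriv (deriv w) x) (at x)"
    and w2c: "continuous_on UNIV (deriv (deriv w))"
    and mono: "antimono w"
    and eq: "\<And>x. deriv (deriv w) x + c * deriv w x
                  + w x * (1 - w x - f (w (x + c * \<tau>))) = 0"
  shows "((w \<longlongrightarrow> w0) at_bot \<and> (w \<longlongrightarrow> 0) at_top \<longrightarrow> c < 0)
       \<and> ((w \<longlongrightarrow> 1) at_bot \<and> (w \<longlongrightarrow> w0) at_top \<longrightarrow> c > 0)"
  using front_from_w0_to_0_speed_neg[OF hF tau w1 w2 mono eq]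
    front_from_1_to_w0_speed_pos[OF hF tau w1 w2 mono eq]
  by blast

end
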